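(* Let $R>0$ and $d\in\mathbb{N}$ be such that $R-x\in\mathcal Q((1-x^2)^3)_d$. Then for every $k\in\mathbb{N}$ we have $R-x^k,\ R+x^k\in\mathcal Q((1-x^2)^3)_{dk}$ and $R-T_k(x),\ R+T_k(x)\in\mathcal Q((1-x^2)^3)_{dk}$.
   Context: For univariate polynomials, $\Sigma[x]_m$ is the cone of sums of squares of degree at most $m$, and $\mathcal Q((1-x^2)^3)_m=\Sigma[x]_m+(1-x^2)^3\Sigma[x]_{m-6}$. $T_k(x)=\cos(k\arccos x)$ is the Chebyshev polynomial of the first kind. *)

theory Defs
  imports "HOL-Computational_Algebra.Polynomial" Complex_Main
begin

text \<open>Sigma[x]_m: sums of squares of real univariate polynomials of degree at most m.
  The index is an integer so that for m < 0 the cone is {0}.\<close>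
definition sos_cone :: "int \<Rightarrow> real poly set" where
  "sos_cone m = {p. \<exists>qs. p = sum_list (map (\<lambda>q. q ^ 2) qs) \<and>
                         (\<forall>q\<in>set qs. 2 * int (degree q) \<le> m)}"

definition qmod_cube :: "int \<Rightarrow> real poly set" where
  "qmod_cube m = {s0 + ([:1, 0, -1:]) ^ 3 * s1 | s0 s1. s0 \<in> sos_cone m \<and> s1 \<in> sos_cone (m - 6)}"

fun cheb :: "nat \<Rightarrow> real poly" where
  "cheb 0 = 1"
| "cheb (Suc 0) = [:0, 1:]"
| "cheb (Suc (Suc n)) = [:0, 2:] * cheb (Suc n) - cheb n"

end

theory Submission
  imports Defs
begin

text \<open>Put g = 1 - x^2. If p has degree at most k and 1 - p^2 = g h for a sum of squares h of
  degree at most 2k - 2, then substituting p into f = s0 + g^3 s1 gives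
  f(p) = s0(p) + g^3 h^3 s1(p), a certificate for f(p) of k times the degree.
  Suitable factorisations are 1 - x^(2k) = g (1 + x^2 + ... + x^(2k-2)) and the Pell identity
  1 - T_k^2 = g U_(k-1)^2; since only p^2 enters, -p works as well as p. For k = 0 both hold
  with h = 0.\<close>

lemma sos_cone_zero: "0 \<in> sos_cone m"
  unfolding sos_cone_def by (intro CollectI exI[of _ "[]"]) simp

lemma sos_cone_power2: "2 * int (degree q) \<le> m \<Longrightarrow> q ^ 2 \<in> sos_cone m"
  unfolding sos_cone_def by (intro CollectI exI[of _ "[q]"]) simp

lemma sos_cone_add: "p \<in> sos_cone m \<Longrightarrow> q \<in> sos_cone m \<Longrightarrow> p + q \<in> sos_cone m"
  unfolding sos_cone_def by (clarsimp, metis (no_types, lifting) Un_iff map_append set_append sum_list_append)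

lemma sos_cone_power2_mult:
  assumes "2 * int (degree a) \<le> m1" and "q \<in> sos_cone m2"
  shows "a ^ 2 * q \<in> sos_cone (m1 + m2)"
proof -
  obtain qs where q: "q = sum_list (map (\<lambda>q. q ^ 2) qs)"
    and deg_qs: "\<forall>q\<in>set qs. 2 * int (degree q) \<le> m2"
    using assms(2) unfolding sos_cone_def by auto
  have "a ^ 2 * q = sum_list (map (\<lambda>q. q ^ 2) (map ((*) a) qs))"
    unfolding q by (induction qs) (auto simp: algebra_simps power_mult_distrib)
  moreover have "2 * int (degree (a * b)) \<le> m1 + m2" if "b \<in> set qs" for b
    using degree_mult_le[of a b] deg_qs that assms(1) by fastforce
  ultimately show ?thesis
    unfolding sos_cone_def by (intro CollectI exI[of _ "map ((*) a) qs"]) auto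
qed

lemma sos_cone_mult:
  assumes "p \<in> sos_cone m1" and "q \<in> sos_cone m2"
  shows "p * q \<in> sos_cone (m1 + m2)"
proof -
  obtain ps where p: "p = sum_list (map (\<lambda>q. q ^ 2) ps)"
    and deg_ps: "\<forall>q\<in>set ps. 2 * int (degree q) \<le> m1"
    using assms(1) unfolding sos_cone_def by auto
  from deg_ps have "sum_list (map (\<lambda>q. q ^ 2) ps) * q \<in> sos_cone (m1 + m2)"
    by (induction ps) (simp_all add: distrib_right sos_cone_zero sos_cone_add sos_cone_power2_mult assms(2))
  then show ?thesis using p by simp
qed

lemma pcompose_power: "pcompose (p ^ n) r = pcompose p r ^ n"
  for p r :: "'a::comm_semiring_1 poly"
  by (induction n) (simp_all add: pcompose_1 pcompose_mult)

lemma sos_cone_pcompose: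
  assumes "p \<in> sos_cone m" and "degree r \<le> k"
  shows "pcompose p r \<in> sos_cone (int k * m)"
proof -
  obtain ps where p: "p = sum_list (map (\<lambda>q. q ^ 2) ps)"
    and deg_ps: "\<forall>q\<in>set ps. 2 * int (degree q) \<le> m"
    using assms(1) unfolding sos_cone_def by auto
  have "pcompose p r = sum_list (map (\<lambda>q. q ^ 2) (map (\<lambda>q. pcompose q r) ps))"
    unfolding p by (induction ps) (simp_all add: pcompose_add pcompose_power)
  moreover have "2 * int (degree (pcompose q r)) \<le> int k * m" if "q \<in> set ps" for q
  proof -
    have "2 * int (degree q) * int (degree r) \<le> m * int k"
      by (rule mult_mono) (use deg_ps that assms(2) in auto)
    then show ?thesis by (simp add: degree_pcompose algebra_simps)
  qed
  ultimately show ?thesis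
    unfolding sos_cone_def by (intro CollectI exI[of _ "map (\<lambda>q. pcompose q r) ps"]) auto
qed

lemma pcompose_one_minus_square: "pcompose [:1, 0, -1:] p = 1 - p ^ 2"
  for p :: "real poly"
  by (simp add: pcompose_pCons power2_eq_square algebra_simps)

lemma one_minus_square_eq: "[:1, 0, -1:] = 1 - [:0, 1::real:] ^ 2"
  by (simp add: power2_eq_square one_pCons)

lemma qmod_cube_pcompose:
  assumes f: "f \<in> qmod_cube m"
    and deg_p: "degree p \<le> k"
    and factor: "1 - p ^ 2 = [:1, 0, -1:] * h"
    and h: "h \<in> sos_cone (2 * int k - 2)"
  shows "pcompose f p \<in> qmod_cube (int k * m)"
proof -
  obtain s0 s1 where f_eq: "f = s0 + [:1, 0, -1:] ^ 3 * s1"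
    and s0: "s0 \<in> sos_cone m" and s1: "s1 \<in> sos_cone (m - 6)"
    using f unfolding qmod_cube_def by auto
  have "pcompose ([:1, 0, -1:] ^ 3) p = [:1, 0, -1:] ^ 3 * h ^ 3"
    by (simp only: pcompose_power pcompose_one_minus_square factor power_mult_distrib)
  then have "pcompose f p = pcompose s0 p + [:1, 0, -1:] ^ 3 * (h ^ 3 * pcompose s1 p)"
    by (simp only: f_eq pcompose_add pcompose_mult mult.assoc)
  moreover have "h ^ 3 \<in> sos_cone (3 * (2 * int k - 2))"
    using sos_cone_mult[OF h sos_cone_mult[OF h h]] by (simp add: power3_eq_cube algebra_simps)
  then have "h ^ 3 * pcompose s1 p \<in> sos_cone (int k * m - 6)"
    using sos_cone_mult[OF _ sos_cone_pcompose[OF s1 deg_p]] by (force simp: algebra_simps)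
  ultimately show ?thesis
    using sos_cone_pcompose[OF s0 deg_p] unfolding qmod_cube_def by blast
qed

lemma one_minus_monom_square:
  "1 - monom 1 k ^ 2 = [:1, 0, -1:] * sum_list (map (\<lambda>i. monom (1::real) i ^ 2) [0..<k])"
proof (induction k)
  case (Suc k)
  have "monom (1::real) (Suc k) ^ 2 = monom 1 k ^ 2 * [:0, 1:] ^ 2"
    by (simp add: monom_altdef power_mult_distrib flip: power_mult_distrib)
  then have "1 - monom 1 (Suc k) ^ 2 = (1 - monom 1 k ^ 2) + [:1, 0, -1:] * monom (1::real) k ^ 2"
    by (simp add: one_minus_square_eq algebra_simps)
  then show ?case using Suc by (simp add: algebra_simps)
qed simp

lemma sum_monom_squares_in_sos_cone:
  "sum_list (map (\<lambda>i. monom (1::real) i ^ 2) [0..<k]) \<in> sos_cone (2 * int k - 2)"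
  unfolding sos_cone_def
  by (intro CollectI exI[of _ "map (monom 1) [0..<k]"]) (auto simp: degree_monom_eq o_def)

text \<open>\<open>cheb_u n\<close> is the Chebyshev polynomial \<open>U\<^sub>n\<^sub>-\<^sub>1\<close> of the second kind, shifted so
  that the sequence starts with \<open>U\<^sub>-\<^sub>1 = 0\<close> and obeys the same recurrence as \<open>cheb\<close>.\<close>
fun cheb_u :: "nat \<Rightarrow> real poly" where
  "cheb_u 0 = 0"
| "cheb_u (Suc 0) = 1"
| "cheb_u (Suc (Suc n)) = [:0, 2:] * cheb_u (Suc n) - cheb_u n"

lemma degree_cheb: "degree (cheb n) \<le> n"
proof (induction n rule: cheb.induct)
  case (3 n)
  have "degree ([:0, 2:] * cheb (Suc n)) \<le> Suc (Suc n)"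
    using degree_mult_le[of "[:0, 2:]" "cheb (Suc n)"] 3 by simp
  then show ?case using degree_diff_le[of _ "Suc (Suc n)" "cheb n"] 3 by simp
qed simp_all

lemma degree_cheb_u: "degree (cheb_u n) \<le> n - 1"
proof (induction n rule: cheb_u.induct)
  case (3 n)
  have "degree ([:0, 2:] * cheb_u (Suc n)) \<le> Suc n"
    using degree_mult_le[of "[:0, 2:]" "cheb_u (Suc n)"] 3 by simp
  then show ?case using degree_diff_le[of _ "Suc n" "cheb_u n"] 3 by simp
qed simp_all

text \<open>The third identity is the one that lets the induction for the first two go through.\<close>
lemma cheb_pell:
  defines "X \<equiv> [:0, 1::real:]"
  shows "cheb n ^ 2 - (X ^ 2 - 1) * cheb_u n ^ 2 = 1 \<and>
         cheb (Suc n) ^ 2 - (X ^ 2 - 1) * cheb_u (Suc n) ^ 2 = 1 \<and>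
         cheb (Suc n) * cheb n - (X ^ 2 - 1) * cheb_u (Suc n) * cheb_u n = X"
proof (induction n)
  case 0
  then show ?case by (simp add: X_def)
next
  case (Suc n)
  define a b c e where "a = cheb (Suc n)" and "b = cheb n"
    and "c = cheb_u (Suc n)" and "e = cheb_u n"
  have IH: "a ^ 2 - (X ^ 2 - 1) * c ^ 2 = 1" "b ^ 2 - (X ^ 2 - 1) * e ^ 2 = 1"
    "a * b - (X ^ 2 - 1) * c * e = X"
    using Suc by (auto simp: a_def b_def c_def e_def)
  have "[:0, 2:] = 2 * X" by (simp add: X_def numeral_poly)
  then have step: "cheb (Suc (Suc n)) = 2 * X * a - b" "cheb_u (Suc (Suc n)) = 2 * X * c - e"
    by (simp_all add: a_def b_def c_def e_def)
  have "(2 * X * a - b) ^ 2 - (X ^ 2 - 1) * (2 * X * c - e) ^ 2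
      = 4 * X ^ 2 * (a ^ 2 - (X ^ 2 - 1) * c ^ 2) - 4 * X * (a * b - (X ^ 2 - 1) * c * e)
        + (b ^ 2 - (X ^ 2 - 1) * e ^ 2)"
    by (simp add: power2_eq_square algebra_simps)
  also have "\<dots> = 1" using IH by (simp add: power2_eq_square algebra_simps)
  finally have pell: "(2 * X * a - b) ^ 2 - (X ^ 2 - 1) * (2 * X * c - e) ^ 2 = 1" .
  have "(2 * X * a - b) * a - (X ^ 2 - 1) * (2 * X * c - e) * c
      = 2 * X * (a ^ 2 - (X ^ 2 - 1) * c ^ 2) - (a * b - (X ^ 2 - 1) * c * e)"
    by (simp add: power2_eq_square algebra_simps)
  also have "\<dots> = X" using IH by simp
  finally have cross: "(2 * X * a - b) * a - (X ^ 2 - 1) * (2 * X * c - e) * c = X" .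
  show ?case using pell cross IH step by (simp add: a_def c_def)
qed

lemma one_minus_cheb_square: "1 - cheb k ^ 2 = [:1, 0, -1:] * cheb_u k ^ 2"
  using cheb_pell[of k] by (simp add: one_minus_square_eq algebra_simps)

lemma cheb_u_square_in_sos_cone: "cheb_u k ^ 2 \<in> sos_cone (2 * int k - 2)"
proof (cases k)
  case 0
  then show ?thesis by (simp add: sos_cone_zero)
next
  case (Suc n)
  then show ?thesis using degree_cheb_u[of k] by (intro sos_cone_power2) simp
qed

theorem lemma16:
  fixes R :: real and d :: nat
  assumes "R > 0"
    and "[:R, -1:] \<in> qmod_cube (int d)"
  shows "\<forall>k::nat.
           [:R:] - monom 1 k \<in> qmod_cube (int (d * k)) \<and>
           [:R:] + monom 1 k \<in> qmod_cube (int (d * k)) \<and>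
           [:R:] - cheb k \<in> qmod_cube (int (d * k)) \<and>
           [:R:] + cheb k \<in> qmod_cube (int (d * k))"
proof
  fix k :: nat
  have R_minus_in_qmod_cube: "[:R:] - p \<in> qmod_cube (int (d * k))"
    if "degree p \<le> k" and "1 - p ^ 2 = [:1, 0, -1:] * h" and "h \<in> sos_cone (2 * int k - 2)"
    for p h
    using qmod_cube_pcompose[OF assms(2) that]
    by (simp add: pcompose_pCons mult.commute)
  have deg_monom: "degree (monom 1 k :: real poly) \<le> k"
    by (simp add: degree_monom_eq)
  have "[:R:] - monom 1 k \<in> qmod_cube (int (d * k))"
    by (rule R_minus_in_qmod_cube[OF deg_monom one_minus_monom_square sum_monom_squares_in_sos_cone])
  moreover have "[:R:] - (- monom 1 k) \<in> qmod_cube (int (d * k))"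
    by (rule R_minus_in_qmod_cube[OF _ _ sum_monom_squares_in_sos_cone])
      (simp_all add: deg_monom one_minus_monom_square)
  moreover have "[:R:] - cheb k \<in> qmod_cube (int (d * k))"
    by (rule R_minus_in_qmod_cube[OF degree_cheb one_minus_cheb_square cheb_u_square_in_sos_cone])
  moreover have "[:R:] - (- cheb k) \<in> qmod_cube (int (d * k))"
    by (rule R_minus_in_qmod_cube[OF _ _ cheb_u_square_in_sos_cone])
      (simp_all add: degree_cheb one_minus_cheb_square)
  ultimately show "[:R:] - monom 1 k \<in> qmod_cube (int (d * k)) \<and>
           [:R:] + monom 1 k \<in> qmod_cube (int (d * k)) \<and>
           [:R:] - cheb k \<in> qmod_cube (int (d * k)) \<and>
           [:R:] + cheb k \<in> qmod_cube (int (d * k))"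
    by simp
qed

end
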